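(* Let $G'=(V',E')$ be a substructure of an oriented graph $G$ with $|V'|\ge|E'|$, and let $\omega\in\mathbb{C}$ with $|\omega|=1$. If $\det L_\omega(G')\neq 0$, then $G'$ is all-regular, i.e. every connected component $(V'_i,E'_i)$ of $G'$ satisfies $|V'_i|=|E'_i|$.
   Context: An oriented graph $G=(V,E)$ is a finite directed graph with no loops, no multiple arcs, and no pair of opposite arcs. A substructure of $G$ is a pair $G'=(V',E')$ with $V'\subseteq V$, $E'\subseteq E$; arcs of $E'$ may have endpoints outside $V'$. The Hermitian Laplacian $L_\omega(G')$ is the $V'\times V'$ matrix with diagonal entry at $u$ equal to the number of arcs of $E'$ incident with $u$, and $(u,v)$ entry ($u\ne v$) equal to $-\omega$ if some arc of $E'$ goes $u\to v$, $-\overline\omega$ if some arc of $E'$ goes $v\to u$, $0$ otherwise. Two vertices $u,v\in V'$ are connected in $G'$ if there is a path between them (ignoring arc directions) with all vertices in $V'$ and all arcs in $E'$; the equivalence classes $V'_i$ give the connected components $(V'_i,E'_i)$, where $E'_i$ is the set of arcs of $E'$ with at least one endpoint in $V'_i$. A substructure is regular if $|V'|=|E'|$ and all-regular if each connected component is regular. *)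

theory Defs
  imports "HOL-Analysis.Analysis"
begin

text \<open>Oriented graph on vertex set V with arc set E (arcs are ordered pairs,
  so no multiple arcs): finite, no loops, no pair of opposite arcs.\<close>
definition oriented_graph :: "'v set \<Rightarrow> ('v \<times> 'v) set \<Rightarrow> bool" where
  "oriented_graph V E \<longleftrightarrow> finite V \<and> E \<subseteq> V \<times> V \<and>
     (\<forall>u. (u, u) \<notin> E) \<and> (\<forall>u v. (u, v) \<in> E \<longrightarrow> (v, u) \<notin> E)"

definition substructure :: "'v set \<Rightarrow> ('v \<times> 'v) set \<Rightarrow> 'v set \<Rightarrow> ('v \<times> 'v) set \<Rightarrow> bool" where
  "substructure V E V' E' \<longleftrightarrow> V' \<subseteq> V \<and> E' \<subseteq> E"

definition incident_arcs :: "('v \<times> 'v) set \<Rightarrow> 'v \<Rightarrow> ('v \<times> 'v) set" where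
  "incident_arcs E' u = {e \<in> E'. fst e = u \<or> snd e = u}"

definition herm_laplacian :: "complex \<Rightarrow> ('v \<times> 'v) set \<Rightarrow> 'v \<Rightarrow> 'v \<Rightarrow> complex" where
  "herm_laplacian \<omega> E' u v =
     (if u = v then of_nat (card (incident_arcs E' u))
      else if (u, v) \<in> E' then - \<omega>
      else if (v, u) \<in> E' then - cnj \<omega>
      else 0)"

definition det_on :: "'v set \<Rightarrow> ('v \<Rightarrow> 'v \<Rightarrow> complex) \<Rightarrow> complex" where
  "det_on S M = (\<Sum>p \<in> {p. p permutes S}. of_int (sign p) * (\<Prod>i\<in>S. M i (p i)))"

definition conn_rel :: "'v set \<Rightarrow> ('v \<times> 'v) set \<Rightarrow> ('v \<times> 'v) set" where
  "conn_rel V' E' =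
     ({(u, v). u \<in> V' \<and> v \<in> V' \<and> ((u, v) \<in> E' \<or> (v, u) \<in> E')})\<^sup>* \<inter> (V' \<times> V')"

definition components :: "'v set \<Rightarrow> ('v \<times> 'v) set \<Rightarrow> 'v set set" where
  "components V' E' = V' // conn_rel V' E'"

definition comp_arcs :: "('v \<times> 'v) set \<Rightarrow> 'v set \<Rightarrow> ('v \<times> 'v) set" where
  "comp_arcs E' C = {e \<in> E'. fst e \<in> C \<or> snd e \<in> C}"

definition all_regular :: "'v set \<Rightarrow> ('v \<times> 'v) set \<Rightarrow> bool" where
  "all_regular V' E' \<longleftrightarrow> (\<forall>C \<in> components V' E'. card C = card (comp_arcs E' C))"

end

theory Submission
  imports Defs "Jordan_Normal_Form.Determinant"
begin

text \<open>For \<open>|\<omega>| = 1\<close> the Hermitian Laplacian factors as \<open>L\<^sub>\<omega>(G') = X X\<^sup>*\<close>, where \<open>X\<close> has one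
  column per arc \<open>(u, v) \<in> E'\<close>, with entry \<open>1\<close> at \<open>u\<close> and \<open>-\<omega>\<^sup>*\<close> at \<open>v\<close>. If a vertex set
  \<open>C \<subseteq> V'\<close> met fewer arcs than it has vertices, then only those few columns are nonzero on
  \<open>C\<close>, so some nonzero vector supported on \<open>C\<close> is orthogonal to every column and lies in
  the kernel of \<open>L\<^sub>\<omega>(G')\<close>. Hence a nonsingular Laplacian gives \<open>|V'\<^sub>i| \<le> |E'\<^sub>i|\<close> for every
  component; as the components partition \<open>V'\<close> and have disjoint arc sets,
  \<open>|V'| \<le> \<Sum>\<^sub>i |E'\<^sub>i| \<le> |E'| \<le> |V'|\<close>, and all these inequalities are equalities.\<close>

lemma det_on_eq_det_mat:
  fixes M :: "'v \<Rightarrow> 'v \<Rightarrow> complex"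
  assumes f: "bij_betw f {0..<n} S"
  shows "det_on S M = det (mat n n (\<lambda>(i, j). M (f i) (f j)))"
proof -
  define g where "g = inv_into {0..<n} f"
  have g: "bij_betw g S {0..<n}" unfolding g_def by (rule bij_betw_inv_into[OF f])
  have gf: "\<And>x. x \<in> {0..<n} \<Longrightarrow> g (f x) = x" unfolding g_def using f bij_betw_inv_into_left by fast
  have fg: "\<And>x. x \<in> S \<Longrightarrow> f (g x) = x" unfolding g_def using f bij_betw_inv_into_right by fast
  have inj: "inj_on f {0..<n}" using f bij_betw_def by blast
  define h where "h = map_permutation {0..<n} f"
  have h: "bij_betw h {p. p permutes {0..<n}} {q. q permutes S}"
  proof (rule bij_betw_byWitness[where f' = "map_permutation S g"])
    show "\<forall>p\<in>{p. p permutes {0..<n}}. map_permutation S g (h p) = p"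
      unfolding h_def using map_permutation_compose_inv[OF f _ gf] by auto
    show "\<forall>q\<in>{q. q permutes S}. h (map_permutation S g q) = q"
      unfolding h_def using map_permutation_compose_inv[OF g _ fg] by auto
    show "h ` {p. p permutes {0..<n}} \<subseteq> {q. q permutes S}"
      unfolding h_def using map_permutation_permutes[OF f] by auto
    show "map_permutation S g ` {q. q permutes S} \<subseteq> {p. p permutes {0..<n}}"
      using map_permutation_permutes[OF g] by auto
  qed
  have "det_on S M = (\<Sum>p | p permutes {0..<n}. of_int (sign (h p)) * (\<Prod>i\<in>S. M i (h p i)))"
    unfolding det_on_def by (rule sum.reindex_bij_betw[OF h, symmetric])
  also have "\<dots> = (\<Sum>p | p permutes {0..<n}.
      signof p * (\<Prod>i = 0..<n. mat n n (\<lambda>(i, j). M (f i) (f j)) $$ (i, p i)))"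
  proof (rule sum.cong[OF refl])
    fix p assume "p \<in> {p. p permutes {0..<n}}"
    hence p: "p permutes {0..<n}" by simp
    have "sign (h p) = sign p" unfolding h_def by (rule sign_map_permutation[OF inj p]) simp
    moreover have "(\<Prod>i\<in>S. M i (h p i)) = (\<Prod>i\<in>{0..<n}. M (f i) (h p (f i)))"
      by (rule prod.reindex_bij_betw[OF f, symmetric])
    moreover have "\<dots> = (\<Prod>i = 0..<n. mat n n (\<lambda>(i, j). M (f i) (f j)) $$ (i, p i))"
      by (rule prod.cong[OF refl])
        (use p permutes_in_image[OF p] in \<open>auto simp: h_def map_permutation_apply[OF inj]\<close>)
    ultimately show "of_int (sign (h p)) * (\<Prod>i\<in>S. M i (h p i)) =
        signof p * (\<Prod>i = 0..<n. mat n n (\<lambda>(i, j). M (f i) (f j)) $$ (i, p i))"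
      by simp
  qed
  also have "\<dots> = det (mat n n (\<lambda>(i, j). M (f i) (f j)))"
    by (rule det_def'[symmetric]) simp
  finally show ?thesis .
qed

lemma det_on_eq_0_iff:
  fixes M :: "'v \<Rightarrow> 'v \<Rightarrow> complex"
  assumes "finite S"
  shows "det_on S M = 0 \<longleftrightarrow> (\<exists>y. (\<exists>j\<in>S. y j \<noteq> 0) \<and> (\<forall>i\<in>S. (\<Sum>j\<in>S. M i j * y j) = 0))"
proof -
  define n where "n = card S"
  obtain f where f: "bij_betw f {0..<n} S" using ex_bij_betw_nat_finite[OF assms] n_def by blast
  define g where "g = inv_into {0..<n} f"
  have g: "bij_betw g S {0..<n}" unfolding g_def by (rule bij_betw_inv_into[OF f])
  have gf: "\<And>x. x \<in> {0..<n} \<Longrightarrow> g (f x) = x" unfolding g_def using f bij_betw_inv_into_left by fast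
  have fg: "\<And>x. x \<in> S \<Longrightarrow> f (g x) = x" unfolding g_def using f bij_betw_inv_into_right by fast
  have f_in: "\<And>i. i < n \<Longrightarrow> f i \<in> S" using f bij_betwE by fastforce
  have g_in: "\<And>s. s \<in> S \<Longrightarrow> g s < n" using g bij_betwE by fastforce
  define A where "A = mat n n (\<lambda>(i, j). M (f i) (f j))"
  have A: "A \<in> carrier_mat n n" unfolding A_def by simp
  have mult_vec: "(A *\<^sub>v v) $ i = (\<Sum>t\<in>S. M (f i) t * v $ g t)"
    if "v \<in> carrier_vec n" "i < n" for v i
  proof -
    have "(A *\<^sub>v v) $ i = (\<Sum>j\<in>{0..<n}. M (f i) (f j) * v $ g (f j))"
      using that gf unfolding A_def by (auto simp: scalar_prod_def intro: sum.cong)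
    also have "\<dots> = (\<Sum>t\<in>S. M (f i) t * v $ g t)"
      by (rule sum.reindex_bij_betw[OF f])
    finally show ?thesis .
  qed
  have "det_on S M = 0 \<longleftrightarrow> (\<exists>v. v \<in> carrier_vec n \<and> v \<noteq> 0\<^sub>v n \<and> A *\<^sub>v v = 0\<^sub>v n)"
    using det_on_eq_det_mat[OF f] det_0_iff_vec_prod_zero[OF A] unfolding A_def by simp
  also have "\<dots> \<longleftrightarrow> (\<exists>y. (\<exists>j\<in>S. y j \<noteq> 0) \<and> (\<forall>i\<in>S. (\<Sum>j\<in>S. M i j * y j) = 0))"
  proof
    assume "\<exists>v. v \<in> carrier_vec n \<and> v \<noteq> 0\<^sub>v n \<and> A *\<^sub>v v = 0\<^sub>v n"
    then obtain v where v: "v \<in> carrier_vec n" "v \<noteq> 0\<^sub>v n" "A *\<^sub>v v = 0\<^sub>v n" by blast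
    obtain i where i: "i < n" "v $ i \<noteq> 0"
      using v(1,2) by (metis carrier_vecD eq_vecI index_zero_vec(1,2))
    show "\<exists>y. (\<exists>j\<in>S. y j \<noteq> 0) \<and> (\<forall>i\<in>S. (\<Sum>j\<in>S. M i j * y j) = 0)"
    proof (intro exI[of _ "\<lambda>t. v $ g t"] conjI ballI)
      show "\<exists>j\<in>S. v $ g j \<noteq> 0" using i f_in gf by (intro bexI[of _ "f i"]) auto
      fix s assume s: "s \<in> S"
      have "(A *\<^sub>v v) $ g s = 0" using v(3) g_in[OF s] by simp
      thus "(\<Sum>j\<in>S. M s j * v $ g j) = 0" using mult_vec[OF v(1) g_in[OF s]] fg[OF s] by simp
    qed
  next
    assume "\<exists>y. (\<exists>j\<in>S. y j \<noteq> 0) \<and> (\<forall>i\<in>S. (\<Sum>j\<in>S. M i j * y j) = 0)"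
    then obtain y s where y: "s \<in> S" "y s \<noteq> 0" "\<forall>i\<in>S. (\<Sum>j\<in>S. M i j * y j) = 0" by blast
    define v where "v = vec n (\<lambda>j. y (f j))"
    have v: "v \<in> carrier_vec n" unfolding v_def by simp
    have v_g: "\<And>t. t \<in> S \<Longrightarrow> v $ g t = y t" unfolding v_def using g_in fg by simp
    have "v \<noteq> 0\<^sub>v n" using v_g[OF y(1)] y(2) g_in[OF y(1)] by auto
    moreover have "A *\<^sub>v v = 0\<^sub>v n"
    proof (rule eq_vecI)
      fix i assume "i < dim_vec (0\<^sub>v n :: complex vec)"
      hence i: "i < n" by simp
      have "(A *\<^sub>v v) $ i = (\<Sum>t\<in>S. M (f i) t * y t)" using mult_vec[OF v i] v_g by simp
      also have "\<dots> = 0" using y(3) f_in[OF i] by blast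
      finally show "(A *\<^sub>v v) $ i = 0\<^sub>v n $ i" using i by simp
    qed (use A in simp)
    ultimately show "\<exists>v. v \<in> carrier_vec n \<and> v \<noteq> 0\<^sub>v n \<and> A *\<^sub>v v = 0\<^sub>v n" using v by blast
  qed
  finally show ?thesis .
qed

lemma det_on_zero_row:
  assumes "finite S" "c \<in> S" "\<And>w. M c w = 0"
  shows "det_on S M = 0"
  unfolding det_on_def
  by (rule sum.neutral) (use assms in \<open>auto intro!: prod_zero\<close>)

text \<open>Padding the system with zero rows gives a singular square matrix indexed by \<open>C\<close>.\<close>

lemma homogeneous_system_nontrivial_solution:
  fixes M :: "'a \<Rightarrow> 'v \<Rightarrow> complex"
  assumes fA: "finite A" and fC: "finite C" and less: "card A < card C"
  shows "\<exists>y. (\<exists>j\<in>C. y j \<noteq> 0) \<and> (\<forall>a\<in>A. (\<Sum>j\<in>C. M a j * y j) = 0)"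
proof -
  obtain g where g: "g ` A \<subseteq> C" "inj_on g A"
    using card_le_inj[OF fA fC] less by fastforce
  have "g ` A \<noteq> C" using card_image[OF g(2)] less by auto
  then obtain c where c: "c \<in> C" "c \<notin> g ` A" using g(1) by blast
  define N where "N = (\<lambda>u w. if u \<in> g ` A then M (the_inv_into A g u) w else 0)"
  have "det_on C N = 0" by (rule det_on_zero_row[OF fC c(1)]) (use c(2) in \<open>simp add: N_def\<close>)
  then obtain y where y: "\<exists>j\<in>C. y j \<noteq> 0" "\<forall>i\<in>C. (\<Sum>j\<in>C. N i j * y j) = 0"
    using det_on_eq_0_iff[OF fC] by blast
  have "(\<Sum>j\<in>C. M a j * y j) = 0" if a: "a \<in> A" for a
    using y(2) g(1) a the_inv_into_f_f[OF g(2) a] by (force simp: N_def)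
  with y(1) show ?thesis by blast
qed

definition arc_vector :: "complex \<Rightarrow> 'v \<times> 'v \<Rightarrow> 'v \<Rightarrow> complex" where
  "arc_vector \<omega> e w = (if w = fst e then 1 else if w = snd e then - cnj \<omega> else 0)"

lemma herm_laplacian_eq_sum_arc_vector:
  assumes no_loop: "\<forall>u. (u, u) \<notin> E'" and no_opposite: "\<forall>u v. (u, v) \<in> E' \<longrightarrow> (v, u) \<notin> E'"
    and fE: "finite E'" and unit: "cmod \<omega> = 1"
  shows "herm_laplacian \<omega> E' u w = (\<Sum>e\<in>E'. arc_vector \<omega> e u * cnj (arc_vector \<omega> e w))"
proof (cases "u = w")
  case True
  have "cnj \<omega> * \<omega> = 1"
    using complex_norm_square[of \<omega>] unit by (simp add: mult.commute)
  hence "(\<Sum>e\<in>E'. arc_vector \<omega> e u * cnj (arc_vector \<omega> e u)) =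
      (\<Sum>e\<in>E'. if fst e = u \<or> snd e = u then 1 else 0)"
    by (intro sum.cong) (auto simp: arc_vector_def)
  also have "\<dots> = of_nat (card (incident_arcs E' u))"
    unfolding incident_arcs_def by (subst sum.inter_filter[OF fE, symmetric]) simp
  finally show ?thesis using True by (simp add: herm_laplacian_def)
next
  case False
  have "(\<Sum>e\<in>E'. arc_vector \<omega> e u * cnj (arc_vector \<omega> e w)) =
      (\<Sum>e\<in>E'. (if e = (u, w) then - \<omega> else 0) + (if e = (w, u) then - cnj \<omega> else 0))"
  proof (rule sum.cong[OF refl])
    fix e assume "e \<in> E'"
    moreover obtain a b where ab: "e = (a, b)" by force
    ultimately have "a \<noteq> b" using no_loop by auto
    thus "arc_vector \<omega> e u * cnj (arc_vector \<omega> e w) =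
        (if e = (u, w) then - \<omega> else 0) + (if e = (w, u) then - cnj \<omega> else 0)"
      using False unfolding ab arc_vector_def by auto
  qed
  also have "\<dots> = (if (u, w) \<in> E' then - \<omega> else 0) + (if (w, u) \<in> E' then - cnj \<omega> else 0)"
    by (simp only: sum.distrib sum.delta[OF fE])
  also have "\<dots> = herm_laplacian \<omega> E' u w"
    using False no_opposite unfolding herm_laplacian_def by auto
  finally show ?thesis by simp
qed

lemma det_herm_laplacian_eq_0_if_few_arcs:
  assumes no_loop: "\<forall>u. (u, u) \<notin> E'" and no_opposite: "\<forall>u v. (u, v) \<in> E' \<longrightarrow> (v, u) \<notin> E'"
    and fE: "finite E'" and unit: "cmod \<omega> = 1" and fV: "finite V'"
    and CV: "C \<subseteq> V'" and few: "card (comp_arcs E' C) < card C"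
  shows "det_on V' (herm_laplacian \<omega> E') = 0"
proof -
  have fC: "finite C" using fV CV finite_subset by blast
  have "finite (comp_arcs E' C)" unfolding comp_arcs_def using fE by simp
  then obtain y where y: "\<exists>j\<in>C. y j \<noteq> 0"
    "\<forall>e\<in>comp_arcs E' C. (\<Sum>w\<in>C. cnj (arc_vector \<omega> e w) * y w) = 0"
    using homogeneous_system_nontrivial_solution[OF _ fC few,
        where M = "\<lambda>e w. cnj (arc_vector \<omega> e w)"]
    by blast
  have orth: "(\<Sum>w\<in>C. cnj (arc_vector \<omega> e w) * y w) = 0" if e: "e \<in> E'" for e
  proof (cases "e \<in> comp_arcs E' C")
    case False
    with e have "\<And>w. w \<in> C \<Longrightarrow> arc_vector \<omega> e w = 0"
      unfolding comp_arcs_def arc_vector_def by auto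
    then show ?thesis by simp
  qed (use y(2) in blast)
  define z where "z = (\<lambda>w. if w \<in> C then y w else 0)"
  show ?thesis
  proof (subst det_on_eq_0_iff[OF fV], intro exI[of _ z] conjI ballI)
    show "\<exists>j\<in>V'. z j \<noteq> 0" using y(1) CV z_def by auto
    fix u
    have "(\<Sum>w\<in>V'. herm_laplacian \<omega> E' u w * z w) = (\<Sum>w\<in>C. herm_laplacian \<omega> E' u w * y w)"
      unfolding z_def by (subst sum.mono_neutral_right[OF fV CV]) auto
    also have "\<dots> = (\<Sum>w\<in>C. \<Sum>e\<in>E'. arc_vector \<omega> e u * (cnj (arc_vector \<omega> e w) * y w))"
      by (simp add: herm_laplacian_eq_sum_arc_vector[OF no_loop no_opposite fE unit]
          sum_distrib_right mult.assoc)
    also have "\<dots> = (\<Sum>e\<in>E'. arc_vector \<omega> e u * (\<Sum>w\<in>C. cnj (arc_vector \<omega> e w) * y w))"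
      by (subst sum.swap) (simp add: sum_distrib_left)
    also have "\<dots> = 0" using orth by simp
    finally show "(\<Sum>w\<in>V'. herm_laplacian \<omega> E' u w * z w) = 0" .
  qed
qed

lemma equiv_conn_rel: "equiv V' (conn_rel V' E')"
proof (rule equivI)
  define B where "B = {(u, v). u \<in> V' \<and> v \<in> V' \<and> ((u, v) \<in> E' \<or> (v, u) \<in> E')}"
  have R: "conn_rel V' E' = B\<^sup>* \<inter> V' \<times> V'" unfolding conn_rel_def B_def by simp
  have "sym B" unfolding B_def sym_def by auto
  then show "sym (conn_rel V' E')" unfolding R by (intro sym_Int sym_rtrancl) (auto simp: sym_def)
  show "conn_rel V' E' \<subseteq> V' \<times> V'" "refl_on V' (conn_rel V' E')"
    unfolding R refl_on_def by blast+
  show "trans (conn_rel V' E')" unfolding R by (intro trans_Int trans_rtrancl) (auto simp: trans_def)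
qed

lemma component_subset: "C \<in> components V' E' \<Longrightarrow> C \<subseteq> V'"
  unfolding components_def using in_quotient_imp_subset[OF equiv_conn_rel] by blast

lemma finite_components: "finite V' \<Longrightarrow> finite (components V' E')"
  unfolding components_def by (rule finite_quotient[OF _ equiv_type[OF equiv_conn_rel]])

lemma components_disjoint:
  "C1 \<in> components V' E' \<Longrightarrow> C2 \<in> components V' E' \<Longrightarrow> C1 \<noteq> C2 \<Longrightarrow> C1 \<inter> C2 = {}"
  unfolding components_def using quotient_disj[OF equiv_conn_rel[of V' E']] by blast

lemma component_closed_under_arcs:
  assumes C: "C \<in> components V' E'" and "x \<in> C" "y \<in> V'" "(x, y) \<in> E' \<or> (y, x) \<in> E'"
  shows "y \<in> C"
proof -
  have "x \<in> V'" using component_subset[OF C] \<open>x \<in> C\<close> by blast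
  with assms(3,4) have "(x, y) \<in> conn_rel V' E'" unfolding conn_rel_def by (auto intro: r_into_rtrancl)
  with C \<open>x \<in> C\<close> show ?thesis
    using in_quotient_imp_closed[OF equiv_conn_rel[of V' E']] unfolding components_def by blast
qed

lemma comp_arcs_disjoint:
  assumes C1: "C1 \<in> components V' E'" and C2: "C2 \<in> components V' E'" and "C1 \<noteq> C2"
  shows "comp_arcs E' C1 \<inter> comp_arcs E' C2 = {}"
proof (rule ccontr)
  assume "comp_arcs E' C1 \<inter> comp_arcs E' C2 \<noteq> {}"
  then obtain a b where ab: "(a, b) \<in> E'" "a \<in> C1 \<or> b \<in> C1" "a \<in> C2 \<or> b \<in> C2"
    unfolding comp_arcs_def by fastforce
  then show False
    using components_disjoint[OF assms] component_subset[OF C2]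
      component_closed_under_arcs[OF C1, of a b] component_closed_under_arcs[OF C1, of b a]
    by blast
qed

lemma sum_card_components:
  assumes "finite V'"
  shows "(\<Sum>C\<in>components V' E'. card C) = card V'"
proof -
  have "(\<Sum>C\<in>components V' E'. card C) = card (\<Union>(components V' E'))"
    using finite_components[OF assms] component_subset[of _ V' E'] components_disjoint[of _ V' E']
      finite_subset[OF _ assms]
    by (intro card_Union_disjoint[symmetric]) (auto simp: pairwise_def disjnt_def)
  also have "\<Union>(components V' E') = V'"
    unfolding components_def by (rule Union_quotient[OF equiv_conn_rel])
  finally show ?thesis .
qed

lemma sum_card_comp_arcs_le:
  assumes "finite V'" and "finite E'"
  shows "(\<Sum>C\<in>components V' E'. card (comp_arcs E' C)) \<le> card E'"
proof -
  have "(\<Sum>C\<in>components V' E'. card (comp_arcs E' C)) = card (\<Union>C\<in>components V' E'. comp_arcs E' C)"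
    using assms finite_components[OF assms(1)] comp_arcs_disjoint[of _ V' E']
    unfolding comp_arcs_def[of E']
    by (intro card_UN_disjoint[symmetric]) auto
  also have "\<dots> \<le> card E'" by (rule card_mono[OF assms(2)]) (auto simp: comp_arcs_def)
  finally show ?thesis .
qed

theorem mainTheorem4:
  fixes V V' :: "'v set" and E E' :: "('v \<times> 'v) set" and \<omega> :: complex
  assumes "oriented_graph V E"
    and "substructure V E V' E'"
    and "card E' \<le> card V'"
    and "cmod \<omega> = 1"
    and "det_on V' (herm_laplacian \<omega> E') \<noteq> 0"
  shows "all_regular V' E'"
proof -
  have fV: "finite V'" and fE: "finite E'"
    and no_loop: "\<forall>u. (u, u) \<notin> E'" and no_opposite: "\<forall>u v. (u, v) \<in> E' \<longrightarrow> (v, u) \<notin> E'"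
    using assms(1,2) finite_subset[of E' "V \<times> V"] finite_subset[of V' V]
    unfolding oriented_graph_def substructure_def by blast+
  let ?Q = "components V' E'"
  have le: "card C \<le> card (comp_arcs E' C)" if "C \<in> ?Q" for C
    using det_herm_laplacian_eq_0_if_few_arcs[OF no_loop no_opposite fE assms(4) fV
        component_subset[OF that]] assms(5)
    by (metis not_le)
  have "(\<Sum>C\<in>?Q. card C) = (\<Sum>C\<in>?Q. card (comp_arcs E' C))"
    using sum_mono[of ?Q card "\<lambda>C. card (comp_arcs E' C)", OF le]
      sum_card_comp_arcs_le[OF fV fE] sum_card_components[OF fV, of E'] assms(3)
    by linarith
  then show ?thesis
    unfolding all_regular_def
    using sum_mono_inv[where f = card and g = "\<lambda>C. card (comp_arcs E' C)"] le finite_components[OF fV]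
    by blast
qed

end
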